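(* Let $k\ge2$ be an integer and $n\in\mathbb Z$. Then $\det(L_k^{(n)})=\det(L_k^{(0)})$ if $k$ is odd, and $\det(L_k^{(n)})=(-1)^n\det(L_k^{(0)})$ if $k$ is even.
   Context: Fix an integer $k\ge2$. Let $Q_k$ be the $k\times k$ matrix whose first row is all ones, with $(Q_k)_{i+1,i}=1$ for $1\le i\le k-1$ and all other entries $0$, and for $r\in\mathbb Z$ let $Q_k^r$ denote its $r$-th power. The generalized Lucas sequence of order $k$, $(l_{k,n})_{n\in\mathbb Z}$, is the two-sided sequence satisfying $l_{k,n+k}=l_{k,n+k-1}+\dots+l_{k,n}$ for all $n\in\mathbb Z$ with initial values $l_{k,r}=\operatorname{trace}(Q_k^r)$ for $0\le r\le k-1$ (so $l_{k,0}=k$ and $l_{k,r}=2^r-1$ for $1\le r\le k-1$). For $n\in\mathbb Z$ the generalized Lucas matrix $L_k^{(n)}$ is the $k\times k$ matrix with entries $(L_k^{(n)})_{i,1}=l_{k,k+n-i}$ and $(L_k^{(n)})_{i,j}=\sum_{m=n-i+j-1}^{k+n-i-1} l_{k,m}$ for $2\le j\le k$, $1\le i\le k$. *)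

theory Defs
  imports "Jordan_Normal_Form.Determinant"
begin

definition Qmat :: "nat \<Rightarrow> int mat" where
  "Qmat k = mat k k (\<lambda>(i,j). if i = 0 then 1 else if i = j + 1 then 1 else 0)"

definition mat_trace :: "'a::comm_ring_1 mat \<Rightarrow> 'a" where
  "mat_trace A = (\<Sum>i<dim_row A. A $$ (i,i))"

definition lucas :: "nat \<Rightarrow> int \<Rightarrow> int" where
  "lucas k = (THE f. (\<forall>n::int. f (n + int k) = (\<Sum>j<k. f (n + int j)))
                   \<and> (\<forall>r<k. f (int r) = mat_trace (Qmat k ^\<^sub>m r)))"

text \<open>The generalized Lucas matrix L_k^(n); entry (i0,j0) (0-based) corresponds to
  (i,j) = (i0+1, j0+1) of the paper.\<close>
definition lucas_mat :: "nat \<Rightarrow> int \<Rightarrow> int mat" where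
  "lucas_mat k n = mat k k (\<lambda>(i0,j0).
     let i = int i0 + 1; j = int j0 + 1 in
     if j = 1 then lucas k (int k + n - i)
     else (\<Sum>m\<in>{n - i + j - 1 .. int k + n - i - 1}. lucas k m))"

end

theory Submission
  imports Defs
begin

text \<open>Let W_n be the k x k Toeplitz matrix with entries l_{k,n-1-i+t} (0-based i, t).
  Column j > 1 of L_k^(n) is the sum of columns j, ..., k of W_n, and by the recurrence the
  first column is the sum of all of them; hence L_k^(n) = W_n U with U lower unitriangular.
  The recurrence also gives W_{n+1} = Q_k W_n, so det L_k^(n+1) = det Q_k * det L_k^(n) with
  det Q_k = (-1)^(k+1). This factor is its own inverse, so the relation can be iterated
  downwards from n = 0 as well.\<close>

definition kbonacci_rec :: "nat \<Rightarrow> (int \<Rightarrow> 'a::comm_monoid_add) \<Rightarrow> bool" where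
  "kbonacci_rec k f \<longleftrightarrow> (\<forall>n. f (n + int k) = (\<Sum>j<k. f (n + int j)))"

lemma kbonacci_rec_backward:
  fixes f :: "int \<Rightarrow> 'a::ab_group_add"
  assumes "kbonacci_rec k f" "k > 0"
  shows "f n = f (n + int k) - (\<Sum>j\<in>{1..<k}. f (n + int j))"
proof -
  have "(\<Sum>j<k. f (n + int j)) = f n + (\<Sum>j\<in>{1..<k}. f (n + int j))"
    using \<open>k > 0\<close> by (simp add: lessThan_atLeast0 sum.atLeast_Suc_lessThan)
  then show ?thesis using assms(1) by (simp add: kbonacci_rec_def)
qed

text \<open>A window of \<open>k\<close> consecutive zeros propagates in both directions.\<close>

lemma kbonacci_rec_zero:
  fixes h :: "int \<Rightarrow> 'a::ab_group_add"
  assumes rec: "kbonacci_rec k h" and "k > 0" and init: "\<And>r. r < k \<Longrightarrow> h (int r) = 0"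
  shows "h n = 0"
proof -
  define zero_window where "zero_window m \<longleftrightarrow> (\<forall>j<k. h (m + int j) = 0)" for m
  have "zero_window m" for m
  proof (induction m rule: int_induct[where k = 0])
    case base
    show ?case using init by (simp add: zero_window_def)
  next
    case (step1 m)
    have "h (m + int k) = 0"
      using step1.IH rec by (simp add: zero_window_def kbonacci_rec_def)
    show ?case
      unfolding zero_window_def
    proof (intro allI impI)
      fix j assume "j < k"
      then consider "Suc j < k" | "Suc j = k" by linarith
      then show "h (m + 1 + int j) = 0"
        using step1.IH \<open>h (m + int k) = 0\<close> unfolding zero_window_def
        by cases (metis add.assoc of_nat_Suc)+
    qed
  next
    case (step2 m)
    have shifted: "h (m - 1 + int j) = 0" if "1 \<le> j" "j \<le> k" for j
    proof -
      have "j - 1 < k" using that by simp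
      then have "h (m + int (j - 1)) = 0"
        using step2.IH unfolding zero_window_def by blast
      then show ?thesis using \<open>1 \<le> j\<close> by (simp add: algebra_simps)
    qed
    have "(\<Sum>j\<in>{1..<k}. h (m - 1 + int j)) = 0"
      by (rule sum.neutral) (auto intro: shifted)
    then have "h (m - 1) = 0"
      using kbonacci_rec_backward[OF rec \<open>k > 0\<close>, of "m - 1"] shifted[of k] \<open>k > 0\<close>
      by simp
    show ?case
      unfolding zero_window_def
    proof (intro allI impI)
      fix j assume "j < k"
      show "h (m - 1 + int j) = 0"
        using \<open>h (m - 1) = 0\<close> shifted[of j] \<open>j < k\<close> by (cases "j = 0") auto
    qed
  qed
  then show ?thesis using \<open>k > 0\<close> unfolding zero_window_def by (metis add_0_right of_nat_0)
qed

function kbonacci_ext :: "nat \<Rightarrow> (nat \<Rightarrow> 'a::ab_group_add) \<Rightarrow> int \<Rightarrow> 'a" where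
  "kbonacci_ext k a n =
     (if k = 0 then 0
      else if 0 \<le> n \<and> n < int k then a (nat n)
      else if n \<ge> int k then (\<Sum>j<k. kbonacci_ext k a (n - int k + int j))
      else kbonacci_ext k a (n + int k) - (\<Sum>j\<in>{1..<k}. kbonacci_ext k a (n + int j)))"
  by pat_completeness auto
termination
  by (relation "measure (\<lambda>(k, a, n). if n \<ge> 0 then nat n else k + nat (- n))") auto

declare kbonacci_ext.simps [simp del]

lemma kbonacci_ext_init: "r < k \<Longrightarrow> kbonacci_ext k a (int r) = a r"
  by (subst kbonacci_ext.simps) simp

lemma kbonacci_rec_ext:
  assumes "k > 0"
  shows "kbonacci_rec k (kbonacci_ext k a)"
  unfolding kbonacci_rec_def
proof
  fix n
  show "kbonacci_ext k a (n + int k) = (\<Sum>j<k. kbonacci_ext k a (n + int j))"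
  proof (cases "n \<ge> 0")
    case True
    then show ?thesis using assms by (subst kbonacci_ext.simps) simp
  next
    case False
    have "(\<Sum>j<k. kbonacci_ext k a (n + int j))
        = kbonacci_ext k a n + (\<Sum>j\<in>{1..<k}. kbonacci_ext k a (n + int j))"
      using assms by (simp add: lessThan_atLeast0 sum.atLeast_Suc_lessThan)
    moreover have "kbonacci_ext k a n
        = kbonacci_ext k a (n + int k) - (\<Sum>j\<in>{1..<k}. kbonacci_ext k a (n + int j))"
      using False assms by (subst kbonacci_ext.simps) simp
    ultimately show ?thesis by simp
  qed
qed

lemma kbonacci_rec_unique:
  fixes f g :: "int \<Rightarrow> 'a::ab_group_add"
  assumes "kbonacci_rec k f" "kbonacci_rec k g" "k > 0"
    and "\<And>r. r < k \<Longrightarrow> f (int r) = g (int r)"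
  shows "f = g"
proof
  fix n
  have "kbonacci_rec k (\<lambda>n. f n - g n)"
    using assms(1,2) by (simp add: kbonacci_rec_def sum_subtractf)
  then have "f n - g n = 0"
    by (rule kbonacci_rec_zero) (use assms in auto)
  then show "f n = g n" by simp
qed

lemma ex1_kbonacci_rec:
  fixes a :: "nat \<Rightarrow> 'a::ab_group_add"
  assumes "k > 0"
  shows "\<exists>!f. kbonacci_rec k f \<and> (\<forall>r<k. f (int r) = a r)"
proof (rule ex1I)
  show "kbonacci_rec k (kbonacci_ext k a) \<and> (\<forall>r<k. kbonacci_ext k a (int r) = a r)"
    using assms by (simp add: kbonacci_rec_ext kbonacci_ext_init)
next
  fix f assume "kbonacci_rec k f \<and> (\<forall>r<k. f (int r) = a r)"
  then show "f = kbonacci_ext k a"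
    using assms by (intro kbonacci_rec_unique) (auto simp: kbonacci_rec_ext kbonacci_ext_init)
qed

lemma kbonacci_rec_lucas: "k > 0 \<Longrightarrow> kbonacci_rec k (lucas k)"
  using theI'[OF ex1_kbonacci_rec[of k "\<lambda>r. mat_trace (Qmat k ^\<^sub>m r)"]]
  unfolding lucas_def kbonacci_rec_def by blast

definition toeplitz_window :: "nat \<Rightarrow> (int \<Rightarrow> 'a) \<Rightarrow> int \<Rightarrow> 'a mat" where
  "toeplitz_window k f n = mat k k (\<lambda>(i, t). f (n - 1 - int i + int t))"

definition lower_ones_mat :: "nat \<Rightarrow> 'a::{zero,one} mat" where
  "lower_ones_mat k = mat k k (\<lambda>(i, j). if j \<le> i then 1 else 0)"

lemma det_lower_ones_mat: "det (lower_ones_mat k) = (1 :: 'a::comm_ring_1)"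
proof -
  have "det (lower_ones_mat k) = prod_list (diag_mat (lower_ones_mat k) :: 'a list)"
    by (rule det_lower_triangular[of k]) (auto simp: lower_ones_mat_def)
  also have "diag_mat (lower_ones_mat k) = replicate k (1 :: 'a)"
    by (rule nth_equalityI) (auto simp: diag_mat_def lower_ones_mat_def)
  finally show ?thesis by simp
qed

lemma det_Qmat:
  assumes "k > 0"
  shows "det (Qmat k) = (-1) ^ (k + 1)"
proof -
  have Q: "Qmat k \<in> carrier_mat k k" by (simp add: Qmat_def)
  have "det (Qmat k) = (\<Sum>i<k. Qmat k $$ (i, k - 1) * cofactor (Qmat k) i (k - 1))"
    by (rule laplace_expansion_column[OF Q]) (use assms in auto)
  also have "\<dots> = (\<Sum>i<k. if i = 0 then cofactor (Qmat k) 0 (k - 1) else 0)"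
    by (rule sum.cong[OF refl]) (use assms in \<open>auto simp: Qmat_def\<close>)
  also have "\<dots> = cofactor (Qmat k) 0 (k - 1)"
    using assms by simp
  also have "mat_delete (Qmat k) 0 (k - 1) = 1\<^sub>m (k - 1)"
    by (rule eq_matI) (auto simp: mat_delete_def Qmat_def)
  then have "cofactor (Qmat k) 0 (k - 1) = (-1) ^ (k - 1)"
    by (simp add: cofactor_def)
  also have "(-1 :: int) ^ (k - 1) = (-1) ^ (k + 1)"
  proof -
    have "k + 1 = (k - 1) + 2" using assms by simp
    then show ?thesis by (simp only: power_add) simp
  qed
  finally show ?thesis .
qed

lemma sum_int_interval_shift:
  fixes a :: int
  shows "(\<Sum>m\<in>{a + int p..a + int q}. g m) = (\<Sum>t\<in>{p..q}. g (a + int t))"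
proof -
  have "{a + int p..a + int q} = (\<lambda>t. a + int t) ` {p..q}"
    using image_add_atLeastAtMost[of a "int p" "int q"]
    by (simp add: image_image image_int_atLeastAtMost[symmetric] add.commute)
  then show ?thesis by (simp add: sum.reindex inj_on_def)
qed

lemma toeplitz_window_succ:
  fixes f :: "int \<Rightarrow> int"
  assumes "kbonacci_rec k f" "k > 0"
  shows "toeplitz_window k f (n + 1) = Qmat k * toeplitz_window k f n"
proof (rule eq_matI)
  fix i t assume "i < dim_row (Qmat k * toeplitz_window k f n)"
    and "t < dim_col (Qmat k * toeplitz_window k f n)"
  then have i: "i < k" and t: "t < k" by (auto simp: toeplitz_window_def Qmat_def)
  have prod: "(Qmat k * toeplitz_window k f n) $$ (i, t)
      = (\<Sum>s<k. (if i = 0 then 1 else if i = s + 1 then 1 else 0) * f (n - 1 - int s + int t))"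
    using i t by (simp add: toeplitz_window_def Qmat_def scalar_prod_def lessThan_atLeast0)
  show "toeplitz_window k f (n + 1) $$ (i, t) = (Qmat k * toeplitz_window k f n) $$ (i, t)"
  proof (cases "i = 0")
    case True
    have "f (n + int t) = f ((n + int t - int k) + int k)" by simp
    also have "\<dots> = (\<Sum>j<k. f (n + int t - int k + int j))"
      using assms(1) unfolding kbonacci_rec_def by (rule spec)
    also have "\<dots> = (\<Sum>s<k. f (n - 1 - int s + int t))"
      by (rule sum.reindex_bij_witness[where i="\<lambda>s. k - 1 - s" and j="\<lambda>s. k - 1 - s"])
        (auto simp: algebra_simps)
    finally show ?thesis using prod True i t by (simp add: toeplitz_window_def)
  next
    case False
    have "(\<Sum>s<k. (if i = 0 then 1 else if i = s + 1 then 1 else 0) * f (n - 1 - int s + int t))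
        = (\<Sum>s<k. if s = i - 1 then f (n - 1 - int s + int t) else 0)"
      by (rule sum.cong[OF refl]) (use False in auto)
    also have "\<dots> = f (n - 1 - int (i - 1) + int t)" using i by simp
    finally show ?thesis
      using prod False i t by (simp add: toeplitz_window_def algebra_simps)
  qed
qed (auto simp: toeplitz_window_def Qmat_def)

lemma lucas_mat_factor:
  assumes "k > 0"
  shows "lucas_mat k n = toeplitz_window k (lucas k) n * lower_ones_mat k"
proof (rule eq_matI)
  fix i j assume "i < dim_row (toeplitz_window k (lucas k) n * lower_ones_mat k)"
    and "j < dim_col (toeplitz_window k (lucas k) n * lower_ones_mat k)"
  then have i: "i < k" and j: "j < k" by (auto simp: toeplitz_window_def lower_ones_mat_def)
  let ?l = "\<lambda>t. lucas k (n - 1 - int i + int t)"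
  have prod: "(toeplitz_window k (lucas k) n * lower_ones_mat k) $$ (i, j)
      = (\<Sum>t<k. if j \<le> t then ?l t else 0)"
    using i j by (auto simp: toeplitz_window_def lower_ones_mat_def scalar_prod_def
                             lessThan_atLeast0 intro!: sum.cong)
  show "lucas_mat k n $$ (i, j) = (toeplitz_window k (lucas k) n * lower_ones_mat k) $$ (i, j)"
  proof (cases "j = 0")
    case True
    have "lucas k (int k + n - (int i + 1)) = lucas k ((n - 1 - int i) + int k)"
      by (simp add: algebra_simps)
    also have "\<dots> = (\<Sum>t<k. ?l t)"
      using kbonacci_rec_lucas[OF assms] by (simp add: kbonacci_rec_def)
    finally show ?thesis using i j True prod by (simp add: lucas_mat_def)
  next
    case False
    have "lucas_mat k n $$ (i, j)
        = (\<Sum>m\<in>{(n - 1 - int i) + int j..(n - 1 - int i) + int (k - 1)}. lucas k m)"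
      using i j False assms by (simp add: lucas_mat_def algebra_simps)
    also have "\<dots> = (\<Sum>t\<in>{j..k - 1}. ?l t)" by (rule sum_int_interval_shift)
    also have "\<dots> = (\<Sum>t<k. if j \<le> t then ?l t else 0)"
    proof -
      have "{..<k} \<inter> {t. j \<le> t} = {j..k - 1}" using assms by auto
      then show ?thesis by (simp add: sum.If_cases)
    qed
    finally show ?thesis using prod by simp
  qed
qed (auto simp: lucas_mat_def toeplitz_window_def lower_ones_mat_def)

lemma det_lucas_mat_succ:
  assumes "k > 0"
  shows "det (lucas_mat k (n + 1)) = (-1) ^ (k + 1) * det (lucas_mat k n)"
proof -
  have det_factor: "det (lucas_mat k m) = det (toeplitz_window k (lucas k) m)" for m
  proof -
    have "det (lucas_mat k m) = det (toeplitz_window k (lucas k) m) * det (lower_ones_mat k)"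
      unfolding lucas_mat_factor[OF assms]
      by (rule det_mult) (auto simp: toeplitz_window_def lower_ones_mat_def)
    then show ?thesis by (simp add: det_lower_ones_mat)
  qed
  have "det (toeplitz_window k (lucas k) (n + 1))
      = det (Qmat k) * det (toeplitz_window k (lucas k) n)"
    unfolding toeplitz_window_succ[OF kbonacci_rec_lucas[OF assms] assms]
    by (rule det_mult) (auto simp: Qmat_def toeplitz_window_def)
  then show ?thesis by (simp add: det_factor det_Qmat[OF assms])
qed

lemma two_sided_geometric:
  fixes D :: "int \<Rightarrow> 'a::comm_ring_1"
  assumes "c * c = 1" and succ: "\<And>n. D (n + 1) = c * D n"
  shows "D n = c ^ nat \<bar>n\<bar> * D 0"
proof (induction n rule: int_induct[where k = 0])
  case base
  show ?case by simp
next
  case (step1 n)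
  then have "nat \<bar>n + 1\<bar> = Suc (nat \<bar>n\<bar>)" by simp
  then show ?case using step1 succ[of n] by (simp add: mult.assoc)
next
  case (step2 n)
  have "D (n - 1) = c * (c * D (n - 1))" using assms(1) by (simp flip: mult.assoc)
  also have "\<dots> = c * D n" using succ[of "n - 1"] by simp
  finally have "D (n - 1) = c * D n" .
  moreover have "nat \<bar>n - 1\<bar> = Suc (nat \<bar>n\<bar>)" using step2 by simp
  ultimately show ?case using step2.IH by (simp only: power_Suc mult.assoc)
qed

theorem theorem4:
  fixes k :: nat and n :: int
  assumes "k \<ge> 2"
  shows "(odd k \<longrightarrow> det (lucas_mat k n) = det (lucas_mat k 0)) \<and>
         (even k \<longrightarrow> det (lucas_mat k n) = (-1) ^ nat \<bar>n\<bar> * det (lucas_mat k 0))"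
proof -
  have "k > 0" using assms by simp
  have "det (lucas_mat k n) = ((-1) ^ (k + 1)) ^ nat \<bar>n\<bar> * det (lucas_mat k 0)"
    by (rule two_sided_geometric) (simp_all add: det_lucas_mat_succ[OF \<open>k > 0\<close>] flip: power_add)
  then show ?thesis by auto
qed

end
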